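(* Let $n\ge3$. Assume $f\in C_0^4(\mathbb{R}^n)$, $g\in C_0^3(\mathbb{R}^n)$, not both identically zero, both supported in $\{x\in\mathbb{R}^n:|x|\le k\}$ for some $k>1$. Let \[ V(x,t)=\frac{1}{\omega_n}\int_{|\omega|=1}\left(\frac{t\,\omega\cdot\nabla f}{n-2}+f+tg\right)(x+t\omega)\,dS_\omega . \] Then there exists a constant $C_{n,k}>0$ depending only on $n$ and $k$ such that \[ (t+|x|+2k)^{n-2}|\nabla_x^\alpha V(x,t)|\le C_{n,k}\left(\sum_{|\beta|\le|\alpha|+2}\|\nabla_x^\beta f\|_{L^\infty(\mathbb{R}^n)}+\sum_{|\gamma|\le|\alpha|+1}\|\nabla_x^\gamma g\|_{L^\infty(\mathbb{R}^n)}\right) \] for all multi-indices $|\alpha|\le2$ and all $(x,t)\in\mathbb{R}^n\times[0,\infty)$, and \[ \operatorname{supp}V\subset\{(x,t)\in\mathbb{R}^n\times[0,\infty):\ -k\le t-|x|\le k\}. \]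
   Context: $\omega_n=2\pi^{n/2}/\Gamma(n/2)$ is the measure of the unit sphere in $\mathbb{R}^n$. *)

theory Defs
  imports "HOL-Analysis.Analysis"
begin

text \<open>Measure of the unit sphere in R^n: omega_n = 2 pi^(n/2) / Gamma(n/2).\<close>
definition omega :: "nat \<Rightarrow> real" where
  "omega n = 2 * pi powr (real n / 2) / Gamma (real n / 2)"

definition partial :: "'n::finite \<Rightarrow> (real^'n \<Rightarrow> real) \<Rightarrow> real^'n \<Rightarrow> real" where
  "partial i f x = deriv (\<lambda>s. f (x + s *\<^sub>R axis i 1)) 0"

definition has_partial :: "'n::finite \<Rightarrow> (real^'n \<Rightarrow> real) \<Rightarrow> real^'n \<Rightarrow> bool" where
  "has_partial i f x \<longleftrightarrow> (\<exists>D. ((\<lambda>s. f (x + s *\<^sub>R axis i 1)) has_real_derivative D) (at 0))"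

text \<open>Iterated partial derivatives along a list of directions (innermost = last).\<close>
definition iter_partial :: "'n::finite list \<Rightarrow> (real^'n \<Rightarrow> real) \<Rightarrow> real^'n \<Rightarrow> real" where
  "iter_partial ds f = foldr partial ds f"

definition mi_order :: "('n::finite \<Rightarrow> nat) \<Rightarrow> nat" where
  "mi_order \<alpha> = (\<Sum>i\<in>UNIV. \<alpha> i)"

definition mderiv :: "('n::finite \<Rightarrow> nat) \<Rightarrow> (real^'n \<Rightarrow> real) \<Rightarrow> real^'n \<Rightarrow> real" where
  "mderiv \<alpha> f = iter_partial (SOME ds. \<forall>i. count_list ds i = \<alpha> i) f"

definition Ck :: "nat \<Rightarrow> (real^'n::finite \<Rightarrow> real) \<Rightarrow> bool" where
  "Ck m f \<longleftrightarrow> (\<forall>ds::'n list. length ds \<le> m \<longrightarrow>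
       continuous_on UNIV (iter_partial ds f) \<and>
       (length ds < m \<longrightarrow> (\<forall>i x. has_partial i (iter_partial ds f) x)))"

definition tsupp :: "('a::topological_space \<Rightarrow> real) \<Rightarrow> 'a set" where
  "tsupp h = closure {x. h x \<noteq> 0}"

text \<open>L-infinity norm (for continuous functions: the supremum of |h|).\<close>
definition Linf :: "('a \<Rightarrow> real) \<Rightarrow> real" where
  "Linf h = (SUP x. \<bar>h x\<bar>)"

definition grad :: "(real^'n::finite \<Rightarrow> real) \<Rightarrow> real^'n \<Rightarrow> real^'n" where
  "grad f x = (\<chi> i. partial i f x)"

text \<open>Surface integral over the unit sphere S^(n-1) with its standard surface measure, via
  the polar-coordinates identity: int_S h dS = n * int_{|y|<1} h(y/|y|) dy.\<close>
definition sphere_integral :: "(real^'n::finite \<Rightarrow> real) \<Rightarrow> real" where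
  "sphere_integral h = real CARD('n) * integral (ball 0 1) (\<lambda>y. h (y /\<^sub>R norm y))"

definition Vsol :: "(real^'n::finite \<Rightarrow> real) \<Rightarrow> (real^'n \<Rightarrow> real) \<Rightarrow> real^'n \<Rightarrow> real \<Rightarrow> real" where
  "Vsol f g x t = (1 / omega CARD('n)) * sphere_integral (\<lambda>w.
      t * (w \<bullet> grad f (x + t *\<^sub>R w)) / (real CARD('n) - 2)
      + f (x + t *\<^sub>R w) + t * g (x + t *\<^sub>R w))"

end

theory Submission
  imports Defs
begin

text \<open>Written in polar coordinates, the spherical mean defining \<open>V\<close> is an integral over the unit
  ball of \<open>y \<mapsto> F (x + t y/|y|)\<close>. Differentiating under the integral sign shows that
  \<open>\<nabla>\<^sup>\<alpha> V\<close> has the same form with \<open>f\<close>, \<open>g\<close> replaced by their derivatives (Schwarz's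
  theorem makes \<open>mderiv\<close> independent of the order of differentiation). If \<open>|t - |x|| > k\<close>
  the sphere of radius \<open>t\<close> about \<open>x\<close> misses the support, so everything vanishes there.
  Otherwise the integrals are bounded by sup norms, and for \<open>t > k\<close> only a cap of directions
  of measure \<open>O((k/t)\<^sup>n\<^sup>-\<^sup>1)\<close> contributes; with the factor \<open>t\<close> in front this gives
  decay \<open>t\<^sup>2\<^sup>-\<^sup>n\<close>, which compensates the weight \<open>(t + |x| + 2k)\<^sup>n\<^sup>-\<^sup>2\<close> since
  \<open>|x| \<le> t + k\<close>.\<close>

definition vanishes_outside :: "real \<Rightarrow> ('a::real_normed_vector \<Rightarrow> real) \<Rightarrow> bool" where
  "vanishes_outside k F \<longleftrightarrow> (\<forall>z. k < norm z \<longrightarrow> F z = 0)"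

lemma tsupp_subset_cball_imp_vanishes_outside:
  fixes F :: "'a::real_normed_vector \<Rightarrow> real"
  assumes "tsupp F \<subseteq> cball 0 k"
  shows "vanishes_outside k F"
  unfolding vanishes_outside_def
proof (intro allI impI)
  fix z :: 'a assume "k < norm z"
  then have "z \<notin> tsupp F" using assms by (auto simp: subset_iff)
  then show "F z = 0"
    using closure_subset[of "{x. F x \<noteq> 0}"] unfolding tsupp_def by auto
qed

lemma has_real_derivative_partial_along:
  assumes "\<And>z. has_partial i F z"
  shows "((\<lambda>r. F (z + r *\<^sub>R axis i 1)) has_real_derivative partial i F (z + r *\<^sub>R axis i 1)) (at r)"
proof -
  from assms obtain D where D: "((\<lambda>s. F ((z + r *\<^sub>R axis i 1) + s *\<^sub>R axis i 1)) has_real_derivative D) (at 0)"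
    unfolding has_partial_def by blast
  have "partial i F (z + r *\<^sub>R axis i 1) = D"
    unfolding partial_def using DERIV_imp_deriv[OF D] .
  moreover have "(\<lambda>s. F ((z + r *\<^sub>R axis i 1) + s *\<^sub>R axis i 1)) = (\<lambda>s. F (z + (s + r) *\<^sub>R axis i 1))"
    by (simp add: algebra_simps)
  ultimately show ?thesis
    using D DERIV_shift[of "\<lambda>r. F (z + r *\<^sub>R axis i 1)" D 0 r] by simp
qed

lemma partial_vanishes_outside:
  fixes F :: "real^'n::finite \<Rightarrow> real"
  assumes "vanishes_outside k F"
  shows "vanishes_outside k (partial i F)"
  unfolding vanishes_outside_def
proof (intro allI impI)
  fix z :: "real^'n" assume z: "k < norm z"
  have "\<forall>\<^sub>F s in at 0. F (z + s *\<^sub>R axis i 1) = 0"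
    unfolding eventually_at
  proof (intro exI[of _ "norm z - k"] conjI ballI impI)
    fix s :: real assume "s \<noteq> 0 \<and> dist s 0 < norm z - k"
    moreover have "norm z - \<bar>s\<bar> \<le> norm (z + s *\<^sub>R axis i 1)"
      using norm_triangle_ineq2[of z "- (s *\<^sub>R axis i 1)"] by simp
    ultimately show "F (z + s *\<^sub>R axis i 1) = 0"
      using assms unfolding vanishes_outside_def by simp
  qed (use z in simp)
  then have "((\<lambda>s. F (z + s *\<^sub>R axis i 1)) has_real_derivative 0) (at 0)
      = ((\<lambda>_. 0::real) has_real_derivative 0) (at 0)"
    by (rule has_field_derivative_cong_eventually) (use assms z in \<open>simp add: vanishes_outside_def\<close>)
  then show "partial i F z = 0"
    unfolding partial_def by (simp add: DERIV_imp_deriv)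
qed

lemma iter_partial_Nil [simp]: "iter_partial [] F = F"
  by (simp add: iter_partial_def)

lemma iter_partial_Cons [simp]: "iter_partial (a # ds) F = partial a (iter_partial ds F)"
  by (simp add: iter_partial_def)

lemma iter_partial_vanishes_outside:
  fixes F :: "real^'n::finite \<Rightarrow> real"
  assumes "vanishes_outside k F"
  shows "vanishes_outside k (iter_partial ds F)"
  by (induction ds) (simp_all add: assms partial_vanishes_outside)

lemma abs_le_Linf:
  fixes h :: "'a::{real_normed_vector, heine_borel} \<Rightarrow> real"
  assumes "continuous_on UNIV h" and "vanishes_outside k h"
  shows "\<bar>h z\<bar> \<le> Linf h"
proof -
  have "compact (h ` cball 0 k)"
    by (rule compact_continuous_image) (rule continuous_on_subset[OF assms(1)], simp_all)
  then obtain B where B: "\<forall>y \<in> h ` cball 0 k. norm y \<le> B"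
    using compact_imp_bounded bounded_iff by metis
  have "\<bar>h x\<bar> \<le> max B 0" for x
  proof (cases "norm x \<le> k")
    case True
    then have "norm (h x) \<le> B" using B by simp
    then show ?thesis by simp
  qed (use assms(2) in \<open>simp add: vanishes_outside_def\<close>)
  then have "bdd_above (range (\<lambda>x. \<bar>h x\<bar>))" by (intro bdd_aboveI2)
  then show ?thesis unfolding Linf_def by (rule cSUP_upper[OF UNIV_I])
qed

lemma mixed_second_difference_mean_value:
  fixes G :: "real^'n::finite \<Rightarrow> real"
  assumes pa: "\<And>z. has_partial a G z" and pab: "\<And>z. has_partial b (partial a G) z" and h: "h > 0"
  obtains u v where "0 < u" "u < h" "0 < v" "v < h"
    "G (x + h *\<^sub>R axis a 1 + h *\<^sub>R axis b 1) - G (x + h *\<^sub>R axis a 1) - G (x + h *\<^sub>R axis b 1) + G x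
       = h * h * partial b (partial a G) (x + u *\<^sub>R axis a 1 + v *\<^sub>R axis b 1)"
proof -
  define ea where "ea = (axis a 1 :: real^'n)"
  define eb where "eb = (axis b 1 :: real^'n)"
  have "((\<lambda>u. G ((x + h *\<^sub>R eb) + u *\<^sub>R ea) - G (x + u *\<^sub>R ea)) has_real_derivative
      (partial a G ((x + h *\<^sub>R eb) + u *\<^sub>R ea) - partial a G (x + u *\<^sub>R ea))) (at u)" for u
    unfolding ea_def by (intro DERIV_diff has_real_derivative_partial_along pa)
  then obtain u where u: "0 < u" "u < h" and eq1: "(G ((x + h *\<^sub>R eb) + h *\<^sub>R ea) - G (x + h *\<^sub>R ea))
       - (G ((x + h *\<^sub>R eb) + 0 *\<^sub>R ea) - G (x + 0 *\<^sub>R ea))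
       = (h - 0) * (partial a G ((x + h *\<^sub>R eb) + u *\<^sub>R ea) - partial a G (x + u *\<^sub>R ea))"
    using MVT2[of 0 h "\<lambda>u. G ((x + h *\<^sub>R eb) + u *\<^sub>R ea) - G (x + u *\<^sub>R ea)"
        "\<lambda>u. partial a G ((x + h *\<^sub>R eb) + u *\<^sub>R ea) - partial a G (x + u *\<^sub>R ea)"] h by blast
  have "((\<lambda>v. partial a G ((x + u *\<^sub>R ea) + v *\<^sub>R eb)) has_real_derivative
      partial b (partial a G) ((x + u *\<^sub>R ea) + v *\<^sub>R eb)) (at v)" for v
    unfolding eb_def by (rule has_real_derivative_partial_along[OF pab])
  then obtain v where v: "0 < v" "v < h" and eq2: "partial a G ((x + u *\<^sub>R ea) + h *\<^sub>R eb)
        - partial a G ((x + u *\<^sub>R ea) + 0 *\<^sub>R eb) = (h - 0) * partial b (partial a G) ((x + u *\<^sub>R ea) + v *\<^sub>R eb)"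
    using MVT2[of 0 h "\<lambda>v. partial a G ((x + u *\<^sub>R ea) + v *\<^sub>R eb)"
        "\<lambda>v. partial b (partial a G) ((x + u *\<^sub>R ea) + v *\<^sub>R eb)"] h by blast
  have "(x + h *\<^sub>R eb) + u *\<^sub>R ea = (x + u *\<^sub>R ea) + h *\<^sub>R eb"
    by (simp add: algebra_simps)
  with eq1 eq2 have "G (x + h *\<^sub>R ea + h *\<^sub>R eb) - G (x + h *\<^sub>R ea) - G (x + h *\<^sub>R eb) + G x
      = h * h * partial b (partial a G) (x + u *\<^sub>R ea + v *\<^sub>R eb)"
    by (simp add: algebra_simps)
  with u v show ?thesis using that unfolding ea_def eb_def by blast
qed

lemma partial_commute:
  fixes G :: "real^'n::finite \<Rightarrow> real"
  assumes pa: "\<And>z. has_partial a G z" and pb: "\<And>z. has_partial b G z"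
    and pab: "\<And>z. has_partial b (partial a G) z" and pba: "\<And>z. has_partial a (partial b G) z"
    and cab: "continuous_on UNIV (partial b (partial a G))"
    and cba: "continuous_on UNIV (partial a (partial b G))"
  shows "partial a (partial b G) x = partial b (partial a G) x"
proof -
  define P1 where "P1 = partial b (partial a G)"
  define P2 where "P2 = partial a (partial b G)"
  have close: "dist (x + u *\<^sub>R axis a 1 + v *\<^sub>R axis b 1) x < d"
    if "0 < u" "u < d/2" "0 < v" "v < d/2" for u v d :: real
  proof -
    have "norm (u *\<^sub>R axis a 1 + v *\<^sub>R axis b (1::real)) \<le> u + v"
      using norm_triangle_ineq[of "u *\<^sub>R axis a (1::real)" "v *\<^sub>R axis b 1"] that by simp
    then show ?thesis using that by (simp add: dist_norm)
  qed
  have "\<bar>P1 x - P2 x\<bar> \<le> 2 * e" if e: "e > 0" for e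
  proof -
    obtain d1 where d1: "d1 > 0" "\<And>y. dist y x < d1 \<Longrightarrow> dist (P1 y) (P1 x) < e"
      using cab e unfolding P1_def continuous_on_eq_continuous_at[OF open_UNIV] continuous_at_eps_delta
      by blast
    obtain d2 where d2: "d2 > 0" "\<And>y. dist y x < d2 \<Longrightarrow> dist (P2 y) (P2 x) < e"
      using cba e unfolding P2_def continuous_on_eq_continuous_at[OF open_UNIV] continuous_at_eps_delta
      by blast
    define h where "h = min d1 d2 / 2"
    have h: "h > 0" using d1 d2 by (simp add: h_def)
    \<comment> \<open>The same mixed second difference, expanded once along \<open>a\<close> first and once along \<open>b\<close> first.\<close>
    obtain u1 v1 where uv1: "0 < u1" "u1 < h" "0 < v1" "v1 < h" and D1:
      "G (x + h *\<^sub>R axis a 1 + h *\<^sub>R axis b 1) - G (x + h *\<^sub>R axis a 1) - G (x + h *\<^sub>R axis b 1) + G x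
         = h * h * P1 (x + u1 *\<^sub>R axis a 1 + v1 *\<^sub>R axis b 1)"
      unfolding P1_def using mixed_second_difference_mean_value[OF pa pab h] .
    obtain v2 u2 where uv2: "0 < v2" "v2 < h" "0 < u2" "u2 < h" and D2:
      "G (x + h *\<^sub>R axis b 1 + h *\<^sub>R axis a 1) - G (x + h *\<^sub>R axis b 1) - G (x + h *\<^sub>R axis a 1) + G x
         = h * h * P2 (x + v2 *\<^sub>R axis b 1 + u2 *\<^sub>R axis a 1)"
      unfolding P2_def using mixed_second_difference_mean_value[OF pb pba h] .
    have "x + h *\<^sub>R axis b 1 + h *\<^sub>R axis a 1 = x + h *\<^sub>R axis a 1 + h *\<^sub>R axis (b::'n) (1::real)"
      "x + v2 *\<^sub>R axis b 1 + u2 *\<^sub>R axis a 1 = x + u2 *\<^sub>R axis a 1 + v2 *\<^sub>R axis (b::'n) (1::real)"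
      by (simp_all add: algebra_simps)
    with D1 D2 have "h * h * P1 (x + u1 *\<^sub>R axis a 1 + v1 *\<^sub>R axis b 1)
        = h * h * P2 (x + u2 *\<^sub>R axis a 1 + v2 *\<^sub>R axis b 1)"
      by (simp only:)
    with h have eq: "P1 (x + u1 *\<^sub>R axis a 1 + v1 *\<^sub>R axis b 1) = P2 (x + u2 *\<^sub>R axis a 1 + v2 *\<^sub>R axis b 1)"
      by simp
    have "dist (P1 (x + u1 *\<^sub>R axis a 1 + v1 *\<^sub>R axis b 1)) (P1 x) < e"
      using uv1 by (intro d1(2) close) (auto simp: h_def)
    moreover have "dist (P2 (x + u2 *\<^sub>R axis a 1 + v2 *\<^sub>R axis b 1)) (P2 x) < e"
      using uv2 by (intro d2(2) close) (auto simp: h_def)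
    ultimately show ?thesis using eq unfolding dist_real_def by linarith
  qed
  then have "\<bar>P1 x - P2 x\<bar> \<le> 0 + e" if "e > 0" for e
    using that by (metis field_sum_of_halves half_gt_zero mult_2 add_0)
  then have "\<bar>P1 x - P2 x\<bar> \<le> 0"
    by (rule field_le_epsilon)
  then show ?thesis by (simp add: P1_def P2_def)
qed

lemma Ck_continuous_on: "Ck m f \<Longrightarrow> length ds \<le> m \<Longrightarrow> continuous_on UNIV (iter_partial ds f)"
  unfolding Ck_def by blast

lemma Ck_has_partial: "Ck m f \<Longrightarrow> length ds < m \<Longrightarrow> has_partial i (iter_partial ds f) x"
  unfolding Ck_def by fastforce

lemma Ck_iter_partial_swap:
  assumes f: "Ck m f" and len: "length ds + 2 \<le> m"
  shows "iter_partial (a # b # ds) f = iter_partial (b # a # ds) f"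
proof
  fix x
  let ?G = "iter_partial ds f"
  have "partial a (partial b ?G) x = partial b (partial a ?G) x"
  proof (rule partial_commute)
    show "has_partial a ?G z" "has_partial b ?G z" for z using Ck_has_partial[OF f] len by auto
    show "has_partial b (partial a ?G) z" for z using Ck_has_partial[OF f, of "a # ds"] len by simp
    show "has_partial a (partial b ?G) z" for z using Ck_has_partial[OF f, of "b # ds"] len by simp
    show "continuous_on UNIV (partial b (partial a ?G))" using Ck_continuous_on[OF f, of "b # a # ds"] len by simp
    show "continuous_on UNIV (partial a (partial b ?G))" using Ck_continuous_on[OF f, of "a # b # ds"] len by simp
  qed
  then show "iter_partial (a # b # ds) f x = iter_partial (b # a # ds) f x" by simp
qed

lemma Ck_iter_partial_move_front:
  assumes f: "Ck m f"
  shows "length (xs @ a # ys) \<le> m \<Longrightarrow> iter_partial (xs @ a # ys) f = iter_partial (a # xs @ ys) f"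
proof (induction xs)
  case (Cons c xs)
  then have "iter_partial ((c # xs) @ a # ys) f = iter_partial (c # a # xs @ ys) f" by simp
  also have "\<dots> = iter_partial (a # c # xs @ ys) f"
    using Cons.prems by (intro Ck_iter_partial_swap[OF f]) simp
  finally show ?case by simp
qed simp

lemma Ck_iter_partial_mset_eq:
  assumes f: "Ck m f"
  shows "length xs \<le> m \<Longrightarrow> mset xs = mset ys \<Longrightarrow> iter_partial xs f = iter_partial ys f"
proof (induction xs arbitrary: ys)
  case (Cons a xs)
  then have "a \<in> set ys" by (metis list.set_intros(1) set_mset_mset)
  then obtain ys1 ys2 where ys: "ys = ys1 @ a # ys2" by (meson split_list)
  have m: "mset xs = mset (ys1 @ ys2)" using Cons.prems(2) ys by simp
  have len: "length ys = length (a # xs)" using Cons.prems(2) by (metis mset_eq_length)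
  from Cons.IH[OF _ m] Cons.prems(1) have "iter_partial (a # xs) f = iter_partial (a # ys1 @ ys2) f" by simp
  also have "\<dots> = iter_partial ys f"
    using Ck_iter_partial_move_front[OF f, of ys1 a ys2] ys len Cons.prems(1)
    by simp
  finally show ?case .
qed simp

definition index_list :: "('n::finite \<Rightarrow> nat) \<Rightarrow> 'n list" where
  "index_list \<alpha> = (SOME ds. \<forall>i. count_list ds i = \<alpha> i)"

lemma mderiv_def_index_list: "mderiv \<alpha> f = iter_partial (index_list \<alpha>) f"
  unfolding mderiv_def index_list_def ..

lemma count_list_index_list [simp]: "count_list (index_list \<alpha>) i = \<alpha> i"
proof -
  obtain ds where ds: "mset ds = (\<Sum>i\<in>UNIV. replicate_mset (\<alpha> i) i)" by (meson ex_mset)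
  have "count_list ds i = \<alpha> i" for i
    by (simp add: count_mset[symmetric] ds count_sum)
  then show ?thesis
    unfolding index_list_def by (rule someI[where P = "\<lambda>ds. \<forall>i. count_list ds i = \<alpha> i", rule_format])
qed

lemma mi_order_count_list: "mi_order (count_list ds) = length ds" for ds :: "'n::finite list"
proof (induction ds)
  case (Cons a ds)
  have "(\<Sum>i\<in>UNIV. count_list (a # ds) i) = (\<Sum>i\<in>UNIV. count_list ds i + (if a = i then 1 else 0))"
    by (rule sum.cong) auto
  with Cons show ?case by (simp add: mi_order_def sum.distrib)
qed (simp add: mi_order_def)

lemma length_index_list [simp]: "length (index_list \<alpha>) = mi_order \<alpha>"
proof -
  have "count_list (index_list \<alpha>) = \<alpha>" by (rule ext) simp
  then show ?thesis using mi_order_count_list by metis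
qed

lemma Ck_mderiv_count_list:
  assumes "Ck m f" and "length ds \<le> m"
  shows "mderiv (count_list ds) f = iter_partial ds f"
  unfolding mderiv_def_index_list
  by (rule Ck_iter_partial_mset_eq[OF assms(1)]) (use assms(2) in \<open>auto simp: mi_order_count_list
      intro: multiset_eqI simp: count_mset\<close>)

lemma finite_mi_order_le: "finite {\<beta>::'n::finite \<Rightarrow> nat. mi_order \<beta> \<le> m}"
proof (rule finite_subset)
  have "\<beta> i \<le> mi_order \<beta>" for \<beta> :: "'n \<Rightarrow> nat" and i
    unfolding mi_order_def by (rule member_le_sum) auto
  then show "{\<beta>::'n \<Rightarrow> nat. mi_order \<beta> \<le> m} \<subseteq> Pi UNIV (\<lambda>_. {..m})"
    by (auto intro: le_trans)
  show "finite (Pi UNIV (\<lambda>_. {..m}) :: ('n \<Rightarrow> nat) set)"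
    using finite_PiE[of "UNIV::'n set" "\<lambda>_. {..m}"] by (simp add: PiE_UNIV_domain)
qed

lemma abs_iter_partial_le_Linf_sum:
  fixes f :: "real^'n::finite \<Rightarrow> real"
  assumes f: "Ck m f" and fz: "vanishes_outside k f" and len: "length ds \<le> L" and L: "L \<le> m"
  shows "\<bar>iter_partial ds f z\<bar> \<le> (\<Sum>\<gamma>\<in>{\<gamma>::'n \<Rightarrow> nat. mi_order \<gamma> \<le> L}. Linf (mderiv \<gamma> f))"
proof -
  have Linf: "\<bar>mderiv \<gamma> f y\<bar> \<le> Linf (mderiv \<gamma> f)" if "mi_order \<gamma> \<le> L" for \<gamma> y
    unfolding mderiv_def_index_list
    by (rule abs_le_Linf[OF Ck_continuous_on[OF f] iter_partial_vanishes_outside[OF fz]]) (use that L in simp)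
  have "\<bar>iter_partial ds f z\<bar> = \<bar>mderiv (count_list ds) f z\<bar>"
    using Ck_mderiv_count_list[OF f] len L by simp
  also have "\<dots> \<le> Linf (mderiv (count_list ds) f)"
    using Linf len by (simp add: mi_order_count_list)
  also have "\<dots> \<le> (\<Sum>\<gamma>\<in>{\<gamma>::'n \<Rightarrow> nat. mi_order \<gamma> \<le> L}. Linf (mderiv \<gamma> f))"
    using len by (intro member_le_sum finite_mi_order_le) (auto simp: mi_order_count_list intro: order_trans[OF _ Linf])
  finally show ?thesis .
qed

lemma abs_first_order_remainder_le:
  fixes \<phi> \<phi>' :: "real \<Rightarrow> real"
  assumes d: "\<And>r. (\<phi> has_real_derivative \<phi>' r) (at r)"
    and b: "\<And>r. \<bar>r\<bar> \<le> \<bar>s\<bar> \<Longrightarrow> \<bar>\<phi>' r - \<phi>' 0\<bar> \<le> \<epsilon>"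
  shows "\<bar>\<phi> s - \<phi> 0 - s * \<phi>' 0\<bar> \<le> \<bar>s\<bar> * \<epsilon>"
proof -
  obtain c where c: "\<bar>c\<bar> \<le> \<bar>s\<bar>" and eq: "\<phi> s - \<phi> 0 = s * \<phi>' c"
  proof (cases "0 < s")
    case True
    then obtain c where "0 < c" "c < s" "\<phi> s - \<phi> 0 = (s - 0) * \<phi>' c"
      using MVT2[of 0 s \<phi> \<phi>'] d by blast
    then show ?thesis using that[of c] by simp
  next
    case False
    show ?thesis
    proof (cases "s = 0")
      case False
      with \<open>\<not> 0 < s\<close> obtain c where "s < c" "c < 0" "\<phi> 0 - \<phi> s = (0 - s) * \<phi>' c"
        using MVT2[of s 0 \<phi> \<phi>'] d by force
      then show ?thesis using that[of c] by simp
    qed (use that[of 0] in simp)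
  qed
  have "\<bar>\<phi> s - \<phi> 0 - s * \<phi>' 0\<bar> = \<bar>s\<bar> * \<bar>\<phi>' c - \<phi>' 0\<bar>"
    by (simp add: eq abs_mult[symmetric] right_diff_distrib)
  also have "\<dots> \<le> \<bar>s\<bar> * \<epsilon>" using b[OF c] by (rule mult_left_mono) simp
  finally show ?thesis .
qed

lemma has_real_derivative_integral_translate:
  fixes F D p :: "real^'n::finite \<Rightarrow> real" and \<psi> :: "real^'n \<Rightarrow> real^'n"
  assumes S: "S \<in> lmeasurable" and ne: "norm e = 1"
    and dF: "\<And>z r. ((\<lambda>r. F (z + r *\<^sub>R e)) has_real_derivative D (z + r *\<^sub>R e)) (at r)"
    and cD: "continuous_on UNIV D"
    and pb: "\<And>y. y \<in> S \<Longrightarrow> \<bar>p y\<bar> \<le> 1"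
    and \<psi>b: "\<And>y. y \<in> S \<Longrightarrow> norm (\<psi> y) \<le> R"
    and iF: "\<And>s. (\<lambda>y. p y * F (\<psi> y + s *\<^sub>R e)) integrable_on S"
    and iD: "(\<lambda>y. p y * D (\<psi> y)) integrable_on S"
  shows "((\<lambda>s. integral S (\<lambda>y. p y * F (\<psi> y + s *\<^sub>R e))) has_real_derivative
           integral S (\<lambda>y. p y * D (\<psi> y))) (at 0)"
proof -
  define \<Phi> where "\<Phi> = (\<lambda>s. integral S (\<lambda>y. p y * F (\<psi> y + s *\<^sub>R e)))"
  define L where "L = integral S (\<lambda>y. p y * D (\<psi> y))"
  define m where "m = measure lebesgue S"
  have m0: "m \<ge> 0" unfolding m_def by simp
  \<comment> \<open>Uniform continuity of \<open>D\<close> on a ball containing all translated points makes the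
     first-order remainder uniformly small over \<open>S\<close>.\<close>
  have uc: "uniformly_continuous_on (cball 0 (R + 1)) D"
    by (rule compact_uniformly_continuous) (auto intro: continuous_on_subset[OF cD])
  have "\<exists>\<delta>>0. \<forall>s. \<bar>s\<bar> < \<delta> \<longrightarrow> \<bar>\<Phi> s - \<Phi> 0 - s * L\<bar> \<le> \<epsilon> * \<bar>s\<bar>" if \<epsilon>: "\<epsilon> > 0" for \<epsilon>
  proof -
    define \<epsilon>' where "\<epsilon>' = \<epsilon> / (m + 1)"
    have \<epsilon>': "\<epsilon>' > 0" "\<epsilon>' * m \<le> \<epsilon>"
      using \<epsilon> m0 by (auto simp: \<epsilon>'_def field_simps)
    obtain d where d: "d > 0"
      "\<And>z z'. z \<in> cball 0 (R + 1) \<Longrightarrow> z' \<in> cball 0 (R + 1) \<Longrightarrow> dist z' z < d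
        \<Longrightarrow> dist (D z') (D z) < \<epsilon>'"
      using uc \<epsilon>'(1) unfolding uniformly_continuous_on_def by metis
    have "\<bar>\<Phi> s - \<Phi> 0 - s * L\<bar> \<le> \<epsilon> * \<bar>s\<bar>" if s: "\<bar>s\<bar> < min d 1" for s
    proof -
      have pw: "\<bar>p y * F (\<psi> y + s *\<^sub>R e) - p y * F (\<psi> y + 0 *\<^sub>R e) - s * (p y * D (\<psi> y))\<bar> \<le> \<bar>s\<bar> * \<epsilon>'"
        if y: "y \<in> S" for y
      proof -
        have "\<bar>F (\<psi> y + s *\<^sub>R e) - F (\<psi> y + 0 *\<^sub>R e) - s * D (\<psi> y + 0 *\<^sub>R e)\<bar> \<le> \<bar>s\<bar> * \<epsilon>'"
        proof (rule abs_first_order_remainder_le[where \<phi>' = "\<lambda>r. D (\<psi> y + r *\<^sub>R e)"])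
          fix r :: real assume r: "\<bar>r\<bar> \<le> \<bar>s\<bar>"
          have "norm (\<psi> y + r *\<^sub>R e) \<le> R + 1"
            using norm_triangle_ineq[of "\<psi> y" "r *\<^sub>R e"] \<psi>b[OF y] r s ne by simp
          moreover have "dist (\<psi> y + r *\<^sub>R e) (\<psi> y) < d"
            using r s ne by (simp add: dist_norm)
          ultimately have "dist (D (\<psi> y + r *\<^sub>R e)) (D (\<psi> y)) < \<epsilon>'"
            using \<psi>b[OF y] by (intro d(2)) simp_all
          then show "\<bar>D (\<psi> y + r *\<^sub>R e) - D (\<psi> y + 0 *\<^sub>R e)\<bar> \<le> \<epsilon>'" by (simp add: dist_real_def)
        qed (rule dF)
        then have "\<bar>F (\<psi> y + s *\<^sub>R e) - F (\<psi> y) - s * D (\<psi> y)\<bar> \<le> \<bar>s\<bar> * \<epsilon>'" by simp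
        then have "\<bar>p y\<bar> * \<bar>F (\<psi> y + s *\<^sub>R e) - F (\<psi> y) - s * D (\<psi> y)\<bar> \<le> \<bar>s\<bar> * \<epsilon>'"
          using pb[OF y] mult_left_le_one_le[of _ "\<bar>p y\<bar>"] by (meson abs_ge_zero order_trans)
        then show ?thesis by (simp add: abs_mult[symmetric] algebra_simps)
      qed
      have "\<Phi> s - \<Phi> 0 - s * L
          = integral S (\<lambda>y. p y * F (\<psi> y + s *\<^sub>R e) - p y * F (\<psi> y + 0 *\<^sub>R e) - s * (p y * D (\<psi> y)))"
        unfolding \<Phi>_def L_def
        by (subst integral_diff integral_mult_right, (intro integrable_diff iF integrable_on_mult_right iD)+)+
          simp
      also have "\<bar>\<dots>\<bar> \<le> integral S (\<lambda>y. \<bar>s\<bar> * \<epsilon>')"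
        unfolding real_norm_def[symmetric]
        by (rule integral_norm_bound_integral)
          (use pw S iF[of 0] in \<open>auto intro!: integrable_diff iF integrable_on_mult_right iD integrable_on_const\<close>)
      also have "\<dots> = \<bar>s\<bar> * \<epsilon>' * m"
        using integral_mult[OF integrable_on_const[OF S], of "\<bar>s\<bar> * \<epsilon>'" 1]
        by (simp add: m_def lmeasure_integral[OF S]) (metis mult.commute)
      also have "\<dots> \<le> \<epsilon> * \<bar>s\<bar>"
        using mult_right_mono[OF \<epsilon>'(2) abs_ge_zero[of s]] by (simp add: mult_ac)
      finally show ?thesis .
    qed
    then show ?thesis using d(1) by (intro exI[of _ "min d 1"]) auto
  qed
  then have "(\<Phi> has_derivative (*) L) (at 0)"
    unfolding has_derivative_at_alt by (simp add: bounded_linear_mult_right mult.commute)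
  then show ?thesis unfolding \<Phi>_def L_def has_field_derivative_def .
qed

definition unit_weight :: "(real^'n::finite \<Rightarrow> real) \<Rightarrow> bool" where
  "unit_weight q \<longleftrightarrow> continuous_on (UNIV - {0}) q \<and> (\<forall>y. \<bar>q y\<bar> \<le> 1)"

text \<open>Integrating over the unit ball the radial extension \<open>y \<mapsto> F (x + t y/|y|)\<close> is
  the polar-coordinate form of the surface integral used in \<open>sphere_integral\<close>.\<close>
definition radial_integral ::
  "(real^'n::finite \<Rightarrow> real) \<Rightarrow> (real^'n \<Rightarrow> real) \<Rightarrow> real \<Rightarrow> real^'n \<Rightarrow> real" where
  "radial_integral q F t x = integral (ball 0 1) (\<lambda>y. q y * F (x + t *\<^sub>R (y /\<^sub>R norm y)))"

lemma norm_scaled_direction_le: "norm (t *\<^sub>R (y /\<^sub>R norm y)) \<le> \<bar>t\<bar>"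
  for y :: "'a::real_normed_vector"
  by (cases "y = 0") (simp_all add: abs_mult field_simps)

lemma radial_integrand_integrable:
  fixes F q :: "real^'n::finite \<Rightarrow> real"
  assumes cF: "continuous_on UNIV F" and q: "unit_weight q"
  shows "(\<lambda>y. q y * F (x + t *\<^sub>R (y /\<^sub>R norm y))) integrable_on ball 0 1"
proof -
  let ?S = "ball (0::real^'n) 1 - {0}"
  let ?h = "\<lambda>y. q y * F (x + t *\<^sub>R (y /\<^sub>R norm y))"
  have S: "?S \<in> lmeasurable"
    by (rule lmeasurable_open) (auto intro: bounded_subset[of "ball 0 1"])
  have "continuous_on ?S q"
    using q continuous_on_subset[of "UNIV - {0}" q ?S] unfolding unit_weight_def by blast
  moreover have "continuous_on ?S (\<lambda>y. F (x + t *\<^sub>R (y /\<^sub>R norm y)))"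
    by (rule continuous_on_compose2[OF cF]) (auto intro!: continuous_intros)
  ultimately have ch: "continuous_on ?S ?h" by (rule continuous_on_mult)
  have "compact (F ` cball x \<bar>t\<bar>)"
    by (rule compact_continuous_image) (rule continuous_on_subset[OF cF], simp_all)
  then obtain M where M: "\<forall>z \<in> F ` cball x \<bar>t\<bar>. norm z \<le> M"
    using compact_imp_bounded bounded_iff by metis
  have hM: "\<bar>?h y\<bar> \<le> M" for y
  proof -
    have "x + t *\<^sub>R (y /\<^sub>R norm y) \<in> cball x \<bar>t\<bar>"
      using norm_scaled_direction_le[of t y] by (simp add: dist_norm)
    then have "\<bar>F (x + t *\<^sub>R (y /\<^sub>R norm y))\<bar> \<le> M" using M by fastforce
    then show ?thesis
      using q mult_mono[of "\<bar>q y\<bar>" 1 _ M] unfolding unit_weight_def by (simp add: abs_mult)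
  qed
  have "?h integrable_on ?S"
  proof (rule measurable_bounded_by_integrable_imp_integrable_real[where g = "\<lambda>_. M"])
    show "?h \<in> borel_measurable (lebesgue_on ?S)"
      by (rule continuous_imp_measurable_on_sets_lebesgue[OF ch]) (use S in \<open>simp add: fmeasurableD\<close>)
  qed (use S hM in \<open>simp_all add: integrable_on_const fmeasurableD\<close>)
  then show ?thesis
  proof (rule integrable_spike_set)
    show "negligible {y \<in> ?S - ball 0 1. ?h y \<noteq> 0}" by (rule negligible_subset[of "{}"]) auto
    show "negligible {y \<in> ball 0 1 - ?S. ?h y \<noteq> 0}" by (rule negligible_subset[of "{0}"]) auto
  qed
qed

lemma has_real_derivative_radial_integral:
  fixes F q :: "real^'n::finite \<Rightarrow> real"
  assumes cF: "continuous_on UNIV F" and pF: "\<And>z. has_partial i F z"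
    and cpF: "continuous_on UNIV (partial i F)" and q: "unit_weight q"
  shows "((\<lambda>s. radial_integral q F t (x + s *\<^sub>R axis i 1)) has_real_derivative
           radial_integral q (partial i F) t x) (at 0)"
proof -
  have "(\<lambda>s. radial_integral q F t (x + s *\<^sub>R axis i 1)) =
     (\<lambda>s. integral (ball 0 1) (\<lambda>y. q y * F ((x + t *\<^sub>R (y /\<^sub>R norm y)) + s *\<^sub>R axis i 1)))"
    unfolding radial_integral_def by (intro ext integral_cong) (simp add: add_ac)
  moreover have "((\<lambda>s. integral (ball 0 1) (\<lambda>y. q y * F ((x + t *\<^sub>R (y /\<^sub>R norm y)) + s *\<^sub>R axis i 1)))
     has_real_derivative radial_integral q (partial i F) t x) (at 0)"
    unfolding radial_integral_def
  proof (rule has_real_derivative_integral_translate[where R = "norm x + \<bar>t\<bar>"])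
    show "((\<lambda>r. F (z + r *\<^sub>R axis i 1)) has_real_derivative partial i F (z + r *\<^sub>R axis i 1)) (at r)"
      for z r by (rule has_real_derivative_partial_along[OF pF])
    show "\<bar>q y\<bar> \<le> 1" for y using q by (simp add: unit_weight_def)
    show "norm (x + t *\<^sub>R (y /\<^sub>R norm y)) \<le> norm x + \<bar>t\<bar>" for y
      using norm_triangle_ineq[of x "t *\<^sub>R (y /\<^sub>R norm y)"] norm_scaled_direction_le[of t y]
      by linarith
    have "continuous_on UNIV (\<lambda>z. F (z + s *\<^sub>R axis i 1))" for s
      by (rule continuous_on_compose2[OF cF]) (auto intro!: continuous_intros)
    then show "(\<lambda>y. q y * F (x + t *\<^sub>R (y /\<^sub>R norm y) + s *\<^sub>R axis i 1)) integrable_on ball 0 1" for s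
      using radial_integrand_integrable[OF _ q, of "\<lambda>z. F (z + s *\<^sub>R axis i 1)" x t] by simp
    show "(\<lambda>y. q y * partial i F (x + t *\<^sub>R (y /\<^sub>R norm y))) integrable_on ball 0 1"
      by (rule radial_integrand_integrable[OF cpF q])
  qed (simp_all add: cpF)
  ultimately show ?thesis by simp
qed

lemma radial_integral_eq_0:
  fixes F q :: "real^'n::finite \<Rightarrow> real"
  assumes "vanishes_outside k F" and far: "\<And>w. norm w = 1 \<Longrightarrow> k < norm (x + t *\<^sub>R w)"
  shows "radial_integral q F t x = 0"
proof -
  have "q y * F (x + t *\<^sub>R (y /\<^sub>R norm y)) = 0" if "y \<noteq> 0" for y
    using assms(1) far[of "y /\<^sub>R norm y"] that by (simp add: vanishes_outside_def)
  then have "radial_integral q F t x = integral (ball 0 1) (\<lambda>y::real^'n. 0)"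
    unfolding radial_integral_def by (intro integral_spike[OF negligible_sing]) auto
  then show ?thesis by simp
qed

lemma measure_ball_0_1: "measure lebesgue (ball (0::real^'n::finite) 1) = unit_ball_vol CARD('n)"
  using content_ball[of 1 "0::real^'n"] by (simp add: measure_completion)

lemma measure_cball: "r \<ge> 0 \<Longrightarrow> measure lebesgue (cball (c::real^'n::finite) r) = unit_ball_vol CARD('n) * r ^ CARD('n)"
  using content_cball[of r c] by (simp add: measure_completion)

lemma abs_radial_integral_le:
  fixes F q :: "real^'n::finite \<Rightarrow> real"
  assumes cF: "continuous_on UNIV F" and FM: "\<And>z. \<bar>F z\<bar> \<le> M" and q: "unit_weight q"
  shows "\<bar>radial_integral q F t x\<bar> \<le> M * unit_ball_vol CARD('n)"
proof -
  have "norm (radial_integral q F t x) \<le> integral (ball 0 1) (\<lambda>y::real^'n. M)"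
    unfolding radial_integral_def
  proof (rule integral_norm_bound_integral[OF radial_integrand_integrable[OF cF q]])
    show "norm (q y * F (x + t *\<^sub>R (y /\<^sub>R norm y))) \<le> M" for y
      using q FM mult_mono[of "\<bar>q y\<bar>" 1 _ M] unfolding unit_weight_def by (simp add: abs_mult)
  qed (simp add: integrable_on_const)
  also have "\<dots> = M * unit_ball_vol CARD('n)"
    using integral_mult[OF integrable_on_const[of "ball (0::real^'n) 1"], of M 1]
    by (simp add: lmeasure_integral[symmetric] measure_ball_0_1)
  finally show ?thesis by simp
qed

lemma segment_balls_cover_cone:
  fixes w c :: "'a::real_normed_vector"
  assumes w: "norm w = 1" "norm (w - c) \<le> \<rho>" and s: "0 \<le> s" "s \<le> 1"
    and \<rho>: "0 < \<rho>" "\<rho> \<le> 1" and N: "2 / \<rho> \<le> real N"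
  shows "\<exists>m\<le>N. s *\<^sub>R w \<in> cball ((real m / real N) *\<^sub>R c) (2 * \<rho>)"
proof -
  have N0: "real N > 0" using N \<rho> by (smt (verit) divide_pos_pos)
  have nc: "norm c \<le> 2"
    using norm_triangle_ineq4[of w "w - c"] w \<rho> by simp
  define m where "m = nat \<lfloor>s * real N\<rfloor>"
  have m: "real m \<le> s * real N" "s * real N < real m + 1"
    using s N0 unfolding m_def by (simp_all add: of_nat_nat)
  have mN: "m \<le> N"
    using m(1) s N0 mult_left_le_one_le[of "real N" s] by linarith
  have "s - real m / real N = (s * real N - real m) / real N"
    using N0 by (simp add: field_simps)
  then have d: "0 \<le> s - real m / real N" "s - real m / real N \<le> 1 / real N"
    using m N0 by (simp_all add: divide_right_mono)
  have "norm (s *\<^sub>R w - (real m / real N) *\<^sub>R c)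
      \<le> norm (s *\<^sub>R (w - c)) + norm ((s - real m / real N) *\<^sub>R c)"
    by (rule order_trans[OF _ norm_triangle_ineq]) (simp add: algebra_simps)
  also have "\<dots> \<le> 1 * \<rho> + (1 / real N) * 2"
    using s d mult_mono[OF s(2) w(2)] mult_mono[OF d(2) nc] by (intro add_mono) simp_all
  also have "\<dots> \<le> 2 * \<rho>"
    using N N0 \<rho> by (simp add: field_simps)
  finally show ?thesis
    using mN by (intro exI[of _ m]) (simp add: dist_norm norm_minus_commute)
qed

lemma abs_integral_le_cover_balls:
  fixes h :: "real^'n::finite \<Rightarrow> real"
  assumes int: "h integrable_on ball 0 1" and hM: "\<And>y. \<bar>h y\<bar> \<le> M" and r: "r \<ge> 0"
    and cover: "\<And>y. y \<in> ball 0 1 \<Longrightarrow> h y \<noteq> 0 \<Longrightarrow> \<exists>m\<le>N. y \<in> cball (p m) r"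
  shows "\<bar>integral (ball 0 1) h\<bar> \<le> M * ((real N + 1) * (unit_ball_vol CARD('n) * r ^ CARD('n)))"
proof -
  let ?g = "\<lambda>y. M * (\<Sum>m\<le>N. indicator (cball (p m) r) y :: real)"
  have M0: "M \<ge> 0" using hM[of 0] by linarith
  have ind: "(indicator (cball (p m) r) :: real^'n \<Rightarrow> real) integrable_on ball 0 1" for m
    unfolding integrable_on_indicator by (intro fmeasurable_Int_fmeasurable) simp_all
  have ind_le: "integral (ball 0 1) (indicator (cball (p m) r) :: real^'n \<Rightarrow> real)
      \<le> unit_ball_vol CARD('n) * r ^ CARD('n)" for m
  proof -
    have "integral (ball 0 1) (indicator (cball (p m) r) :: real^'n \<Rightarrow> real)
        = measure lebesgue (cball (p m) r \<inter> ball 0 1)"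
      by (rule integral_indicator) (intro fmeasurable_Int_fmeasurable, simp_all)
    also have "\<dots> \<le> measure lebesgue (cball (p m) r)"
      by (rule measure_mono_fmeasurable) auto
    finally show ?thesis using measure_cball[OF r, of "p m"] by simp
  qed
  have "norm (h y) \<le> ?g y" if y: "y \<in> ball 0 1" for y
  proof (cases "h y = 0")
    case True then show ?thesis using M0 by (simp add: sum_nonneg)
  next
    case False
    then obtain m where m: "m \<le> N" "y \<in> cball (p m) r" using cover[OF y] by blast
    have "norm (h y) \<le> M * indicator (cball (p m) r) y" using m hM by simp
    also have "\<dots> \<le> ?g y"
      using m M0 by (intro mult_left_mono member_le_sum) auto
    finally show ?thesis .
  qed
  then have "norm (integral (ball 0 1) h) \<le> integral (ball 0 1) ?g"
    by (intro integral_norm_bound_integral[OF int] integrable_on_mult_right integrable_sum ind) auto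
  also have "\<dots> = M * (\<Sum>m\<le>N. integral (ball 0 1) (indicator (cball (p m) r) :: real^'n \<Rightarrow> real))"
    by (simp add: integral_sum ind integrable_sum)
  also have "\<dots> \<le> M * (\<Sum>m\<le>N. unit_ball_vol CARD('n) * r ^ CARD('n))"
    using M0 ind_le by (intro mult_left_mono sum_mono) auto
  finally show ?thesis by (simp add: add.commute)
qed

definition decay_factor :: "nat \<Rightarrow> real \<Rightarrow> real \<Rightarrow> real" where
  "decay_factor n k t = (if t \<le> k then 1 else 2 ^ (n + 2) * (k / t) ^ (n - 1))"

lemma decay_factor_nonneg: "0 < k \<Longrightarrow> 0 \<le> t \<Longrightarrow> 0 \<le> decay_factor n k t"
  by (simp add: decay_factor_def)

text \<open>For \<open>t \<ge> k\<close> only the directions \<open>w\<close> with \<open>|x + t w| \<le> k\<close> contribute; they lie within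
  \<open>k/t\<close> of \<open>-x/t\<close>, and the corresponding part of the unit ball is covered by about \<open>t/k\<close>
  balls of radius \<open>2k/t\<close> centred on the segment from \<open>0\<close> to \<open>-x/t\<close>.\<close>
lemma abs_radial_integral_le_decay:
  fixes F q :: "real^'n::finite \<Rightarrow> real"
  assumes cF: "continuous_on UNIV F" and FM: "\<And>z. \<bar>F z\<bar> \<le> M" and q: "unit_weight q"
    and Fz: "vanishes_outside k F" and k: "0 < k"
  shows "\<bar>radial_integral q F t x\<bar> \<le> M * unit_ball_vol CARD('n) * decay_factor CARD('n) k t"
proof (cases "t \<le> k")
  case True
  then show ?thesis using abs_radial_integral_le[OF cF FM q] by (simp add: decay_factor_def)
next
  case False
  define n where "n = CARD('n)"
  define \<rho> where "\<rho> = k / t"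
  define N where "N = nat \<lceil>2 / \<rho>\<rceil>"
  define c where "c = - ((1 / t) *\<^sub>R x)"
  have t: "t > 0" using False k by simp
  have \<rho>: "0 < \<rho>" "\<rho> \<le> 1" using False k t by (simp_all add: \<rho>_def)
  have N: "2 / \<rho> \<le> real N" "real N \<le> 2 / \<rho> + 1"
    using \<rho> unfolding N_def by (simp_all add: of_nat_nat)
  have M0: "M \<ge> 0" using FM[of 0] by linarith
  have cover: "\<exists>m\<le>N. y \<in> cball ((real m / real N) *\<^sub>R c) (2 * \<rho>)"
    if y: "y \<in> ball 0 1" and Fy: "q y * F (x + t *\<^sub>R (y /\<^sub>R norm y)) \<noteq> 0" for y
  proof (cases "y = 0")
    case False
    define w where "w = y /\<^sub>R norm y"
    have "norm (x + t *\<^sub>R w) \<le> k"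
      using Fz Fy unfolding vanishes_outside_def w_def by (metis mult_zero_right not_le)
    moreover have "w - c = (1 / t) *\<^sub>R (x + t *\<^sub>R w)"
      using t by (simp add: c_def algebra_simps)
    ultimately have "norm (w - c) \<le> \<rho>"
      using t by (simp add: \<rho>_def divide_right_mono)
    moreover have "y = norm y *\<^sub>R w" "norm w = 1" using False by (simp_all add: w_def)
    ultimately show ?thesis
      using segment_balls_cover_cone[of w c \<rho> "norm y"] y \<rho> N by simp
  qed (use \<rho> in \<open>auto intro: exI[of _ 0]\<close>)
  have "\<bar>radial_integral q F t x\<bar> \<le> M * ((real N + 1) * (unit_ball_vol n * (2 * \<rho>) ^ n))"
    unfolding radial_integral_def n_def
  proof (rule abs_integral_le_cover_balls[OF radial_integrand_integrable[OF cF q] _ _ cover])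
    show "\<bar>q y * F (x + t *\<^sub>R (y /\<^sub>R norm y))\<bar> \<le> M" for y
      using q FM mult_mono[of "\<bar>q y\<bar>" 1 _ M] unfolding unit_weight_def by (simp add: abs_mult)
  qed (use \<rho> in simp_all)
  also have "\<dots> \<le> M * (unit_ball_vol n * (2 ^ (n + 2) * \<rho> ^ (n - 1)))"
  proof -
    have n: "n \<ge> 1" by (simp add: n_def Suc_leI)
    have "real N + 1 \<le> 4 / \<rho>"
      using N \<rho> by (simp add: field_simps)
    then have "(real N + 1) * (2 * \<rho>) ^ n \<le> 4 / \<rho> * (2 * \<rho>) ^ n"
      using \<rho> by (intro mult_right_mono) simp_all
    also have "\<dots> = 2 ^ (n + 2) * \<rho> ^ (n - 1)"
      using \<rho> n by (simp add: power_mult_distrib power_add power_eq_if[of \<rho> n] field_simps)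
    finally show ?thesis
      using M0 by (intro mult_left_mono) (simp_all add: mult_ac)
  qed
  finally show ?thesis using False by (simp add: decay_factor_def n_def \<rho>_def mult_ac)
qed

definition direction :: "'n::finite \<Rightarrow> real^'n \<Rightarrow> real" where
  "direction j y = (y /\<^sub>R norm y) $ j"

lemma unit_weight_direction:
  fixes j :: "'n::finite"
  shows "unit_weight (direction j)"
proof -
  have "\<bar>(y /\<^sub>R norm y) $ j\<bar> \<le> 1" for y :: "real^'n"
    using component_le_norm_cart[of "y /\<^sub>R norm y" j] norm_scaled_direction_le[of 1 y] by simp
  then show ?thesis
    unfolding unit_weight_def direction_def by (auto intro!: continuous_intros)
qed

lemma unit_weight_one: "unit_weight (\<lambda>_. 1)"
  by (simp add: unit_weight_def)

definition Vsol_deriv ::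
  "(real^'n::finite \<Rightarrow> real) \<Rightarrow> (real^'n \<Rightarrow> real) \<Rightarrow> real \<Rightarrow> 'n list \<Rightarrow> real^'n \<Rightarrow> real" where
  "Vsol_deriv f g t ds x = real CARD('n) / omega CARD('n) *
     (t / (real CARD('n) - 2) * (\<Sum>j\<in>UNIV. radial_integral (direction j) (iter_partial (ds @ [j]) f) t x)
      + radial_integral (\<lambda>_. 1) (iter_partial ds f) t x + t * radial_integral (\<lambda>_. 1) (iter_partial ds g) t x)"

lemma Vsol_eq_Vsol_deriv_Nil:
  fixes f g :: "real^'n::finite \<Rightarrow> real"
  assumes cf: "continuous_on UNIV f" and cpf: "\<And>j. continuous_on UNIV (partial j f)"
    and cg: "continuous_on UNIV g"
  shows "Vsol f g x t = Vsol_deriv f g t [] x"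
proof -
  let ?w = "\<lambda>y::real^'n. y /\<^sub>R norm y"
  let ?c = "t / (real CARD('n) - 2)"
  have ij: "(\<lambda>y. direction j y * partial j f (x + t *\<^sub>R ?w y)) integrable_on ball 0 1" for j
    by (rule radial_integrand_integrable[OF cpf unit_weight_direction])
  have if0: "(\<lambda>y. f (x + t *\<^sub>R ?w y)) integrable_on ball 0 1"
    using radial_integrand_integrable[OF cf unit_weight_one] by simp
  have ig0: "(\<lambda>y. g (x + t *\<^sub>R ?w y)) integrable_on ball 0 1"
    using radial_integrand_integrable[OF cg unit_weight_one] by simp
  have "t * (?w y \<bullet> grad f (x + t *\<^sub>R ?w y)) / (real CARD('n) - 2)
      + f (x + t *\<^sub>R ?w y) + t * g (x + t *\<^sub>R ?w y)
      = ?c * (\<Sum>j\<in>UNIV. direction j y * partial j f (x + t *\<^sub>R ?w y))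
        + f (x + t *\<^sub>R ?w y) + t * g (x + t *\<^sub>R ?w y)" for y
    by (simp add: inner_vec_def grad_def direction_def)
  then have "integral (ball 0 1) (\<lambda>y. t * (?w y \<bullet> grad f (x + t *\<^sub>R ?w y)) / (real CARD('n) - 2)
      + f (x + t *\<^sub>R ?w y) + t * g (x + t *\<^sub>R ?w y))
    = integral (ball 0 1) (\<lambda>y. ?c * (\<Sum>j\<in>UNIV. direction j y * partial j f (x + t *\<^sub>R ?w y))
        + f (x + t *\<^sub>R ?w y) + t * g (x + t *\<^sub>R ?w y))"
    by (simp only:)
  also have "\<dots> = ?c * (\<Sum>j\<in>UNIV. radial_integral (direction j) (partial j f) t x)
      + radial_integral (\<lambda>_. 1) f t x + t * radial_integral (\<lambda>_. 1) g t x"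
  proof -
    have iS: "(\<lambda>y. \<Sum>j\<in>UNIV. direction j y * partial j f (x + t *\<^sub>R ?w y)) integrable_on ball 0 1"
      by (rule integrable_sum) (simp, rule ij)
    have "integral (ball 0 1) (\<lambda>y. \<Sum>j\<in>UNIV. direction j y * partial j f (x + t *\<^sub>R ?w y))
        = (\<Sum>j\<in>UNIV. radial_integral (direction j) (partial j f) t x)"
      unfolding radial_integral_def by (rule integral_sum) (simp, rule ij)
    then show ?thesis
      by (simp only: integral_add[OF integrable_add[OF integrable_on_mult_right[OF iS] if0]
            integrable_on_mult_right[OF ig0]] integral_add[OF integrable_on_mult_right[OF iS] if0]
            integral_mult_right) (simp add: radial_integral_def)
  qed
  finally show ?thesis
    unfolding Vsol_def sphere_integral_def Vsol_deriv_def by simp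
qed

lemma has_real_derivative_Vsol_deriv:
  fixes f g :: "real^'n::finite \<Rightarrow> real"
  assumes f: "Ck m f" "length ds + 2 \<le> m" and g: "Ck m' g" "length ds + 1 \<le> m'"
  shows "((\<lambda>s. Vsol_deriv f g t ds (x + s *\<^sub>R axis a 1)) has_real_derivative
           Vsol_deriv f g t (a # ds) x) (at 0)"
proof -
  have d: "((\<lambda>s. radial_integral q (iter_partial es h) t (x + s *\<^sub>R axis a 1)) has_real_derivative
      radial_integral q (partial a (iter_partial es h)) t x) (at 0)"
    if h: "Ck mh h" "length es < mh" and q: "unit_weight q" for q es mh and h :: "real^'n \<Rightarrow> real"
  proof (rule has_real_derivative_radial_integral[OF _ _ _ q])
    show "continuous_on UNIV (iter_partial es h)" using Ck_continuous_on[OF h(1)] h(2) by simp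
    show "has_partial a (iter_partial es h) z" for z using Ck_has_partial[OF h] .
    show "continuous_on UNIV (partial a (iter_partial es h))"
      using Ck_continuous_on[OF h(1), of "a # es"] h(2) by simp
  qed
  show ?thesis
    unfolding Vsol_deriv_def append_Cons iter_partial_Cons
    by (intro DERIV_cmult DERIV_add DERIV_sum d[OF f(1)] d[OF g(1)])
      (use f g in \<open>simp_all add: unit_weight_direction unit_weight_one\<close>)
qed

lemma iter_partial_Vsol:
  fixes f g :: "real^'n::finite \<Rightarrow> real"
  assumes f: "Ck m f" and g: "Ck m' g"
  shows "length ds < m \<Longrightarrow> length ds \<le> m'
    \<Longrightarrow> iter_partial ds (\<lambda>y. Vsol f g y t) = Vsol_deriv f g t ds"
proof (induction ds)
  case Nil
  show ?case
    using Ck_continuous_on[OF f, of "[]"] Ck_continuous_on[OF f, of "[_]"] Ck_continuous_on[OF g, of "[]"] Nil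
    by (simp add: Vsol_eq_Vsol_deriv_Nil fun_eq_iff)
next
  case (Cons a ds)
  then have "iter_partial ds (\<lambda>y. Vsol f g y t) = Vsol_deriv f g t ds" by simp
  with Cons.prems show ?case
    by (simp add: fun_eq_iff partial_def DERIV_imp_deriv[OF has_real_derivative_Vsol_deriv[OF f _ g]])
qed

lemma omega_eq_unit_ball_vol:
  assumes "n > 0"
  shows "omega n = real n * unit_ball_vol (real n)"
proof -
  have "real n / 2 \<notin> \<int>\<^sub>\<le>\<^sub>0" using assms by (auto elim!: nonpos_Ints_cases)
  then have "Gamma (real n / 2 + 1) = real n / 2 * Gamma (real n / 2)" by (rule Gamma_plus1)
  moreover have "Gamma (real n / 2) > 0" using assms by simp
  ultimately show ?thesis using assms by (simp only: omega_def unit_ball_vol_def) (simp add: field_simps)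
qed

lemma norm_add_scaled_unit_ge:
  fixes x w :: "'a::real_normed_vector"
  assumes "norm w = 1" and "t \<ge> 0"
  shows "\<bar>t - norm x\<bar> \<le> norm (x + t *\<^sub>R w)"
  using norm_triangle_ineq4[of "x + t *\<^sub>R w" x] norm_triangle_ineq4[of "x + t *\<^sub>R w" "t *\<^sub>R w"] assms
  by (simp add: abs_le_iff)

lemma Vsol_eq_0_off_light_cone:
  fixes f g :: "real^'n::finite \<Rightarrow> real"
  assumes fz: "vanishes_outside k f" and gz: "vanishes_outside k g"
    and t: "t \<ge> 0" and kt: "k < \<bar>t - norm x\<bar>"
  shows "Vsol f g x t = 0"
proof -
  let ?w = "\<lambda>y::real^'n. y /\<^sub>R norm y"
  have "t * (?w y \<bullet> grad f (x + t *\<^sub>R ?w y)) / (real CARD('n) - 2) + f (x + t *\<^sub>R ?w y)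
      + t * g (x + t *\<^sub>R ?w y) = 0" if "y \<noteq> 0" for y
  proof -
    have "k < norm (x + t *\<^sub>R (y /\<^sub>R norm y))"
      using norm_add_scaled_unit_ge[of "y /\<^sub>R norm y" t x] that t kt by simp
    moreover have "grad f z = 0" if "k < norm z" for z
      using partial_vanishes_outside[OF fz] that unfolding grad_def vanishes_outside_def
      by (simp add: vec_eq_iff)
    ultimately show ?thesis using fz gz by (simp add: vanishes_outside_def)
  qed
  then show ?thesis
    unfolding Vsol_def sphere_integral_def
    by (subst integral_spike[OF negligible_sing, where f = "\<lambda>_. 0", symmetric]) auto
qed

lemma Vsol_deriv_eq_0_off_light_cone:
  fixes f g :: "real^'n::finite \<Rightarrow> real"
  assumes fz: "vanishes_outside k f" and gz: "vanishes_outside k g"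
    and t: "t \<ge> 0" and kt: "k < \<bar>t - norm x\<bar>"
  shows "Vsol_deriv f g t ds x = 0"
proof -
  have far: "k < norm (x + t *\<^sub>R w)" if "norm w = 1" for w :: "real^'n"
    using norm_add_scaled_unit_ge[OF that t, of x] kt by linarith
  show ?thesis
    unfolding Vsol_deriv_def
    by (simp add: radial_integral_eq_0[OF iter_partial_vanishes_outside[OF fz] far]
        radial_integral_eq_0[OF iter_partial_vanishes_outside[OF gz] far])
qed

lemma abs_Vsol_deriv_le:
  fixes f g :: "real^'n::finite \<Rightarrow> real"
  assumes n3: "CARD('n) \<ge> 3" and k: "0 < k" and t: "t \<ge> 0"
    and f: "Ck m f" "length ds < m" "vanishes_outside k f"
    and g: "Ck m' g" "length ds \<le> m'" "vanishes_outside k g"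
    and bound_f': "\<And>j z. \<bar>iter_partial (ds @ [j]) f z\<bar> \<le> A"
    and bound_f: "\<And>z. \<bar>iter_partial ds f z\<bar> \<le> A" and bound_g: "\<And>z. \<bar>iter_partial ds g z\<bar> \<le> A"
  shows "\<bar>Vsol_deriv f g t ds x\<bar> \<le> (real CARD('n) + 1) * (1 + t) * A * decay_factor CARD('n) k t"
proof -
  define n where "n = CARD('n)"
  define U where "U = unit_ball_vol (real n)"
  define B where "B = A * U * decay_factor n k t"
  define c where "c = t / (real n - 2)"
  have U: "U > 0" by (simp add: U_def)
  have B: "B \<ge> 0"
    using bound_f[of 0] U decay_factor_nonneg[OF k t] by (simp add: B_def)
  have c: "0 \<le> c" "c \<le> t"
    using n3 t divide_left_mono[of 1 "real n - 2" t] by (simp_all add: c_def n_def)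
  have I: "\<bar>radial_integral q (iter_partial es h) t x\<bar> \<le> B"
    if "Ck mh h" "length es \<le> mh" "vanishes_outside k h" "\<And>z. \<bar>iter_partial es h z\<bar> \<le> A" "unit_weight q"
    for q es mh and h :: "real^'n \<Rightarrow> real"
    using abs_radial_integral_le_decay[OF Ck_continuous_on[OF that(1,2)] that(4,5)
        iter_partial_vanishes_outside[OF that(3)] k]
    by (simp add: B_def U_def n_def)
  let ?S = "\<Sum>j\<in>UNIV. radial_integral (direction j) (iter_partial (ds @ [j]) f) t x"
  let ?F = "radial_integral (\<lambda>_. 1) (iter_partial ds f) t x"
  let ?G = "radial_integral (\<lambda>_. 1) (iter_partial ds g) t x"
  have "\<bar>?S\<bar> \<le> (\<Sum>j\<in>(UNIV::'n set). B)"
    using f bound_f' by (intro order_trans[OF sum_abs] sum_mono I unit_weight_direction) auto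
  then have S: "c * \<bar>?S\<bar> \<le> t * (real n * B)"
    using c B by (intro mult_mono) (simp_all add: n_def)
  have F: "\<bar>?F\<bar> \<le> B" and G: "t * \<bar>?G\<bar> \<le> t * B"
    using f g bound_f bound_g t by (auto intro!: I mult_left_mono unit_weight_one)
  have "\<bar>c * ?S + ?F + t * ?G\<bar> \<le> c * \<bar>?S\<bar> + \<bar>?F\<bar> + t * \<bar>?G\<bar>"
    using abs_triangle_ineq[of "c * ?S + ?F" "t * ?G"] abs_triangle_ineq[of "c * ?S" ?F] c t
    by (simp add: abs_mult)
  also have "\<dots> \<le> (real n + 1) * (1 + t) * B"
    using S F G B t by (simp add: algebra_simps) (smt (verit) mult_nonneg_nonneg of_nat_0_le_iff)
  finally have "\<bar>c * ?S + ?F + t * ?G\<bar> \<le> (real n + 1) * (1 + t) * B" .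
  moreover have "Vsol_deriv f g t ds x = (c * ?S + ?F + t * ?G) / U"
    unfolding Vsol_deriv_def using omega_eq_unit_ball_vol[of n] U
    by (simp add: c_def n_def U_def)
  ultimately show ?thesis
    using U by (simp add: B_def U_def n_def divide_le_eq mult_ac)
qed

lemma weight_times_decay_factor_le:
  fixes k t r :: real
  assumes n: "n \<ge> 2" and k: "k > 1" and t: "t \<ge> 0" and r: "0 \<le> r" "r \<le> t + k"
  shows "(t + r + 2 * k) ^ (n - 2) * ((1 + t) * decay_factor n k t) \<le> 2 ^ (n + 3) * (5 * k) ^ n"
proof -
  obtain m where nm: "n = m + 2" using n by (metis add.commute le_iff_add)
  have W: "(t + r + 2 * k) ^ m \<le> (2 * t + 3 * k) ^ m"
    by (rule power_mono) (use r t k in auto)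
  show ?thesis
  proof (cases "t \<le> k")
    case True
    have "(t + r + 2 * k) ^ m * (1 + t) \<le> (5 * k) ^ m * (2 * k)"
      using True t k r order_trans[OF W power_mono[of "2 * t + 3 * k" "5 * k" m]]
      by (intro mult_mono) auto
    also have "\<dots> \<le> (5 * k) ^ m * (2 ^ (m + 5) * (5 * k) ^ 2)"
    proof -
      have "(2::real) \<le> 2 ^ (m + 5)" using power_increasing[of 1 "m + 5" "2::real"] by simp
      moreover have "k \<le> (5 * k) ^ 2" using k by (simp add: power2_eq_square)
      ultimately show ?thesis using k by (intro mult_left_mono mult_mono) auto
    qed
    finally show ?thesis
      using True by (simp add: nm decay_factor_def power_add power2_eq_square mult_ac)
  next
    case False
    then have t0: "t > 0" using k by simp
    have "(t + r + 2 * k) ^ m * ((1 + t) * (2 ^ (m + 4) * (k / t) ^ (m + 1)))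
        \<le> (5 * t) ^ m * (2 * t * (2 ^ (m + 4) * (k / t) ^ (m + 1)))"
      using False k t r order_trans[OF W power_mono[of "2 * t + 3 * k" "5 * t" m]]
      by (intro mult_mono) auto
    also have "\<dots> = 5 ^ m * 2 ^ (m + 5) * (t * (k / t)) ^ (m + 1)"
      unfolding power_mult_distrib by (simp add: power_add mult_ac)
    also have "\<dots> = 5 ^ m * 2 ^ (m + 5) * k ^ (m + 1)" using t0 by simp
    also have "\<dots> \<le> 5 ^ (m + 2) * 2 ^ (m + 5) * k ^ (m + 2)"
      using k by (intro mult_mono power_increasing) auto
    finally have "(t + r + 2 * k) ^ m * ((1 + t) * (2 ^ (m + 4) * (k / t) ^ (m + 1)))
        \<le> 5 ^ (m + 2) * 2 ^ (m + 5) * k ^ (m + 2)" .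
    moreover have "n - 2 = m" "n + 2 = m + 4" "n - 1 = m + 1" "n + 3 = m + 5"
      "(5 * k) ^ n = 5 ^ (m + 2) * k ^ (m + 2)"
      by (simp_all add: nm power_mult_distrib)
    ultimately show ?thesis
      using False unfolding decay_factor_def by (simp only: if_False mult_ac)
  qed
qed

lemma mderiv_Vsol_bound:
  fixes f g :: "real^'n::finite \<Rightarrow> real"
  assumes n3: "CARD('n) \<ge> 3" and k: "k > 1" and t: "t \<ge> 0" and \<alpha>: "mi_order \<alpha> \<le> 2"
    and f: "Ck 4 f" "vanishes_outside k f" and g: "Ck 3 g" "vanishes_outside k g"
  shows "(t + norm x + 2 * k) ^ (CARD('n) - 2) * \<bar>mderiv \<alpha> (\<lambda>y. Vsol f g y t) x\<bar>
    \<le> (real CARD('n) + 1) * 2 ^ (CARD('n) + 3) * (5 * k) ^ CARD('n) *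
       ((\<Sum>\<beta>\<in>{\<beta>::'n \<Rightarrow> nat. mi_order \<beta> \<le> mi_order \<alpha> + 2}. Linf (mderiv \<beta> f))
        + (\<Sum>\<gamma>\<in>{\<gamma>::'n \<Rightarrow> nat. mi_order \<gamma> \<le> mi_order \<alpha> + 1}. Linf (mderiv \<gamma> g)))"
    (is "?W * _ \<le> ?C * (?Sf + ?Sg)")
proof -
  define ds where "ds = index_list \<alpha>"
  have len: "length ds = mi_order \<alpha>" by (simp add: ds_def)
  have bf: "\<bar>iter_partial es f z\<bar> \<le> ?Sf" if "length es \<le> mi_order \<alpha> + 2" for es z
    using abs_iter_partial_le_Linf_sum[OF f that] \<alpha> by simp
  have bg: "\<bar>iter_partial es g z\<bar> \<le> ?Sg" if "length es \<le> mi_order \<alpha> + 1" for es z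
    using abs_iter_partial_le_Linf_sum[OF g that] \<alpha> by simp
  have S0: "0 \<le> ?Sf" "0 \<le> ?Sg" using bf[of "[]" 0] bg[of "[]" 0] by simp_all
  have V: "mderiv \<alpha> (\<lambda>y. Vsol f g y t) x = Vsol_deriv f g t ds x"
    using iter_partial_Vsol[OF f(1) g(1)] len \<alpha> by (simp add: mderiv_def_index_list ds_def)
  have C: "?C \<ge> 0" using k by simp
  show ?thesis
  proof (cases "norm x \<le> t + k")
    case True
    have "\<bar>Vsol_deriv f g t ds x\<bar>
        \<le> (real CARD('n) + 1) * (1 + t) * (?Sf + ?Sg) * decay_factor CARD('n) k t"
      using len \<alpha> S0 k t
      by (intro abs_Vsol_deriv_le[OF n3 _ t f(1) _ f(2) g(1) _ g(2)])
        (auto intro: order_trans[OF bf] order_trans[OF bg])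
    then have "?W * \<bar>Vsol_deriv f g t ds x\<bar>
        \<le> ?W * ((real CARD('n) + 1) * (1 + t) * (?Sf + ?Sg) * decay_factor CARD('n) k t)"
      by (rule mult_left_mono) (use t k in simp)
    also have "\<dots> = (real CARD('n) + 1) * (?Sf + ?Sg) * (?W * ((1 + t) * decay_factor CARD('n) k t))"
      by (simp add: mult_ac)
    also have "\<dots> \<le> (real CARD('n) + 1) * (?Sf + ?Sg) * (2 ^ (CARD('n) + 3) * (5 * k) ^ CARD('n))"
      using weight_times_decay_factor_le[of "CARD('n)" k t "norm x"] n3 k t True S0
      by (intro mult_left_mono) simp_all
    finally show ?thesis using V by (simp add: mult_ac)
  next
    case False
    then have "Vsol_deriv f g t ds x = 0"
      using Vsol_deriv_eq_0_off_light_cone[OF f(2) g(2) t] by simp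
    then show ?thesis using V C S0 by simp
  qed
qed

lemma closure_Vsol_support_subset:
  fixes f g :: "real^'n::finite \<Rightarrow> real"
  assumes "vanishes_outside k f" and "vanishes_outside k g"
  shows "closure {(x, t). t \<ge> 0 \<and> Vsol f g x t \<noteq> 0}
    \<subseteq> {(x, t). t \<ge> 0 \<and> - k \<le> t - norm x \<and> t - norm x \<le> k}"
proof (rule closure_minimal)
  show "{(x, t). t \<ge> 0 \<and> Vsol f g x t \<noteq> 0} \<subseteq> {(x, t). t \<ge> 0 \<and> - k \<le> t - norm x \<and> t - norm x \<le> k}"
  proof safe
    fix x :: "real^'n" and t :: real
    assume t: "0 \<le> t" and V: "Vsol f g x t \<noteq> 0"
    have "\<not> k < \<bar>t - norm x\<bar>"
    proof
      assume "k < \<bar>t - norm x\<bar>"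
      with V show False using Vsol_eq_0_off_light_cone[OF assms t] by simp
    qed
    then show "- k \<le> t - norm x" "t - norm x \<le> k" by auto
  qed
  have "{(x, t). t \<ge> 0 \<and> - k \<le> t - norm x \<and> t - norm x \<le> k}
      = {p::(real^'n) \<times> real. 0 \<le> snd p} \<inter> ({p. - k \<le> snd p - norm (fst p)} \<inter> {p. snd p - norm (fst p) \<le> k})"
    by auto
  also have "closed \<dots>"
    by (intro closed_Int closed_Collect_le continuous_intros)
  finally show "closed {(x::real^'n, t). t \<ge> 0 \<and> - k \<le> t - norm x \<and> t - norm x \<le> k}" .
qed

theorem lemma4p1:
  fixes k :: real
  assumes n3: "CARD('n::finite) \<ge> 3"
    and k1: "k > 1"
  shows "\<exists>C>0. \<forall>(f::real^'n \<Rightarrow> real) (g::real^'n \<Rightarrow> real).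
     Ck 4 f \<and> Ck 3 g \<and> \<not> (f = (\<lambda>_. 0) \<and> g = (\<lambda>_. 0)) \<and>
     tsupp f \<subseteq> cball 0 k \<and> tsupp g \<subseteq> cball 0 k \<longrightarrow>
     (\<forall>(\<alpha>::'n \<Rightarrow> nat) x t. mi_order \<alpha> \<le> 2 \<and> t \<ge> 0 \<longrightarrow>
        (t + norm x + 2 * k) ^ (CARD('n) - 2) * \<bar>mderiv \<alpha> (\<lambda>y. Vsol f g y t) x\<bar>
        \<le> C * ((\<Sum>\<beta>\<in>{\<beta>::'n \<Rightarrow> nat. mi_order \<beta> \<le> mi_order \<alpha> + 2}. Linf (mderiv \<beta> f))
              + (\<Sum>\<gamma>\<in>{\<gamma>::'n \<Rightarrow> nat. mi_order \<gamma> \<le> mi_order \<alpha> + 1}. Linf (mderiv \<gamma> g))))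
     \<and> closure {(x, t). t \<ge> 0 \<and> Vsol f g x t \<noteq> 0}
         \<subseteq> {(x, t). t \<ge> 0 \<and> - k \<le> t - norm x \<and> t - norm x \<le> k}"
proof (intro exI[of _ "(real CARD('n) + 1) * 2 ^ (CARD('n) + 3) * (5 * k) ^ CARD('n)"] conjI allI impI)
  show "(real CARD('n) + 1) * 2 ^ (CARD('n) + 3) * (5 * k) ^ CARD('n) > 0" using k1 by simp
  fix f g :: "real^'n \<Rightarrow> real"
  assume "Ck 4 f \<and> Ck 3 g \<and> \<not> (f = (\<lambda>_. 0) \<and> g = (\<lambda>_. 0)) \<and> tsupp f \<subseteq> cball 0 k \<and> tsupp g \<subseteq> cball 0 k"
  then have f: "Ck 4 f" "vanishes_outside k f" and g: "Ck 3 g" "vanishes_outside k g"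
    using tsupp_subset_cball_imp_vanishes_outside by blast+
  show "closure {(x, t). t \<ge> 0 \<and> Vsol f g x t \<noteq> 0}
      \<subseteq> {(x, t). t \<ge> 0 \<and> - k \<le> t - norm x \<and> t - norm x \<le> k}"
    using closure_Vsol_support_subset[OF f(2) g(2)] .
  fix \<alpha> :: "'n \<Rightarrow> nat" and x :: "real^'n" and t :: real
  assume "mi_order \<alpha> \<le> 2 \<and> t \<ge> 0"
  then show "(t + norm x + 2 * k) ^ (CARD('n) - 2) * \<bar>mderiv \<alpha> (\<lambda>y. Vsol f g y t) x\<bar>
      \<le> (real CARD('n) + 1) * 2 ^ (CARD('n) + 3) * (5 * k) ^ CARD('n) *
        ((\<Sum>\<beta>\<in>{\<beta>::'n \<Rightarrow> nat. mi_order \<beta> \<le> mi_order \<alpha> + 2}. Linf (mderiv \<beta> f))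
          + (\<Sum>\<gamma>\<in>{\<gamma>::'n \<Rightarrow> nat. mi_order \<gamma> \<le> mi_order \<alpha> + 1}. Linf (mderiv \<gamma> g)))"
    using mderiv_Vsol_bound[OF n3 k1 _ _ f g] by blast
qed

end
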